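(* Let $M\ge0$. There is no infinite antichain $S_1,S_2,\dots$ in $(\mathrm{RL},\le_{RL})$, with $S_i$ of type $(d_i,n_i)$, for which the sequence $(d_i)_i$ is bounded.
   Context: Fix an integer $M\ge0$. A reading list of type $(d,n)$ is a tuple $S=(S^1,\dots,S^n)$ of $d$-element subsets of $[Md]=\{1,\dots,Md\}$ (each $S^i$ viewed as an increasing word). $\mathrm{RL}$ denotes the set of all reading lists of all types. For $S=(S^1,\dots,S^n)$ of type $(d,n)$ and $T=(T^1,\dots,T^m)$ of type $(e,m)$, define $S\le_{RL}T$ iff there exist indices $1\le k_1<k_2<\cdots<k_n\le m$ and maps $f_i:S^i\to T^{k_i}$ ($i=1,\dots,n$), each strictly increasing, such that $f_i(x)=f_j(x)$ for all $i,j$ and all $x\in S^i\cap S^j$. An antichain is a sequence of pairwise incomparable elements. *)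

theory Defs
  imports Main
begin

text \<open>A reading list of type (d,n) is represented as a pair (d, S) where S is a list of
  length n of d-element subsets of [M d] = {1..M*d}.\<close>

definition RL :: "nat \<Rightarrow> (nat \<times> nat set list) set" where
  "RL M = {(d, S). \<forall>A\<in>set S. card A = d \<and> A \<subseteq> {1..M*d}}"

text \<open>The order on reading lists (indices of list entries are 0-based).\<close>

definition rl_le :: "nat \<times> nat set list \<Rightarrow> nat \<times> nat set list \<Rightarrow> bool" where
  "rl_le S T \<longleftrightarrow>
     (let SS = snd S; TT = snd T; n = length SS; m = length TT in
      \<exists>(k :: nat \<Rightarrow> nat) (f :: nat \<Rightarrow> nat \<Rightarrow> nat).
        strict_mono_on {..<n} k \<and> (\<forall>i<n. k i < m) \<and>
        (\<forall>i<n. strict_mono_on (SS ! i) (f i) \<and> f i ` (SS ! i) \<subseteq> TT ! (k i)) \<and>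
        (\<forall>i<n. \<forall>j<n. \<forall>x \<in> SS ! i \<inter> SS ! j. f i x = f j x))"

end

theory Submission
  imports Defs "HOL-Library.Sublist" "HOL-Library.Infinite_Set"
begin

text \<open>A sequence of reading lists whose sizes \<open>d\<close> are bounded by \<open>B\<close> is a
  sequence of words over the finite alphabet of subsets of \<open>{1..M*B}\<close>. By Higman's lemma
  some word is a subsequence of a later one, and a subsequence embedding, together with the
  identity maps on the entries, witnesses the reading-list order. Higman's lemma is proved by
  Nash-Williams' minimal bad sequence argument.\<close>

definition bad_seq :: "('b \<Rightarrow> 'b \<Rightarrow> bool) \<Rightarrow> (nat \<Rightarrow> 'b) \<Rightarrow> bool" where
  "bad_seq P f \<longleftrightarrow> (\<forall>i j. i < j \<longrightarrow> \<not> P (f i) (f j))"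

lemma minimal_bad_seq:
  fixes w :: "'b \<Rightarrow> nat"
  assumes "bad_seq P f" and "\<forall>i. f i \<in> X"
  obtains m where "bad_seq P m" and "\<forall>i. m i \<in> X"
    and "\<And>n g. bad_seq P g \<Longrightarrow> \<forall>i. g i \<in> X \<Longrightarrow> \<forall>k<n. g k = m k \<Longrightarrow> w (m n) \<le> w (g n)"
proof -
  define Bad where "Bad = {g. bad_seq P g \<and> (\<forall>i. g i \<in> X)}"
  define cand where "cand n h g \<longleftrightarrow> g \<in> Bad \<and> (\<forall>k<n. g k = h k)" for n h g
  text \<open>\<open>F n\<close> is a bad sequence whose first \<open>n\<close> terms have successively minimal weight.\<close>
  define F where "F = rec_nat f (\<lambda>n h. arg_min (\<lambda>g. w (g n)) (cand n h))"
  have F_Suc: "F (Suc n) = arg_min (\<lambda>g. w (g n)) (cand n (F n))" for n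
    by (simp add: F_def)
  have F_Suc_cand: "cand n (F n) (F (Suc n))" if "F n \<in> Bad" for n
  proof -
    have "cand n (F n) (F n)" using that by (simp add: cand_def)
    then show ?thesis unfolding F_Suc by (rule arg_min_natI[of "cand n (F n)"])
  qed
  have F_Bad: "F n \<in> Bad" for n
  proof (induction n)
    case 0
    then show ?case using assms by (simp add: F_def Bad_def)
  next
    case (Suc n)
    then show ?case using F_Suc_cand by (simp add: cand_def)
  qed
  have F_Suc_agrees: "F (Suc n) k = F n k" if "k < n" for n k
    using that F_Suc_cand[OF F_Bad] by (simp add: cand_def)
  define m where "m n = F (Suc n) n" for n
  have F_prefix: "F n k = m k" if "k < n" for n k
    using that
  proof (induction n)
    case (Suc n)
    then show ?case by (auto simp: F_Suc_agrees m_def less_Suc_eq)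
  qed simp
  show thesis
  proof
    show "bad_seq P m"
      unfolding bad_seq_def
    proof (intro allI impI)
      fix i j :: nat assume "i < j"
      have "\<not> P (F (Suc j) i) (F (Suc j) j)"
        using F_Bad[of "Suc j"] \<open>i < j\<close> by (simp add: Bad_def bad_seq_def)
      then show "\<not> P (m i) (m j)"
        using F_prefix[of i "Suc j"] \<open>i < j\<close> by (simp add: m_def)
    qed
    show "\<forall>i. m i \<in> X"
      using F_Bad by (simp add: Bad_def m_def)
    fix n g assume "bad_seq P g" "\<forall>i. g i \<in> X" "\<forall>k<n. g k = m k"
    then have "cand n (F n) g" by (simp add: cand_def Bad_def F_prefix)
    then show "w (m n) \<le> w (g n)"
      using arg_min_nat_le[of "cand n (F n)" g "\<lambda>g. w (g n)"] by (simp add: m_def F_Suc)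
  qed
qed

lemma bad_seq_splice_tails:
  fixes m :: "nat \<Rightarrow> 'a list"
  assumes m_bad: "bad_seq subseq m" and r_mono: "strict_mono r"
    and m_r: "\<And>i. m (r i) = c # t i"
  shows "bad_seq subseq (\<lambda>k. if k < r 0 then m k else t (k - r 0))"
    (is "bad_seq subseq ?g")
proof -
  define \<rho> where "\<rho> k = (if k < r 0 then k else r (k - r 0))" for k
  have \<rho>_mono: "\<rho> i < \<rho> j" if "i < j" for i j
  proof (cases "j < r 0")
    case False
    have "r 0 \<le> r (j - r 0)" using r_mono by (simp add: strict_mono_less_eq)
    with that False show ?thesis
      by (auto simp: \<rho>_def strict_mono_less[OF r_mono])
  qed (use that in \<open>simp add: \<rho>_def\<close>)
  have subseq_m_\<rho>: "subseq (m (\<rho> i)) (m (\<rho> j))" if "i < j" and "subseq (?g i) (?g j)" for i j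
  proof -
    consider "j < r 0" | "i < r 0" "r 0 \<le> j" | "r 0 \<le> i"
      using \<open>i < j\<close> by linarith
    then show ?thesis
    proof cases
      case 1
      with that show ?thesis by (simp add: \<rho>_def)
    next
      case 2
      with that show ?thesis by (simp add: \<rho>_def m_r list_emb_Cons)
    next
      case 3
      with that show ?thesis by (simp add: \<rho>_def m_r)
    qed
  qed
  show ?thesis
    using m_bad \<rho>_mono subseq_m_\<rho> unfolding bad_seq_def by blast
qed

theorem higman:
  fixes f :: "nat \<Rightarrow> 'a list"
  assumes "finite A" and "\<forall>i. set (f i) \<subseteq> A"
  shows "\<exists>i j. i < j \<and> subseq (f i) (f j)"
proof (rule ccontr)
  assume "\<not> ?thesis"
  then have "bad_seq subseq f" by (auto simp: bad_seq_def)
  then obtain m where m_bad: "bad_seq subseq m" and m_A: "\<forall>i. set (m i) \<subseteq> A"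
    and m_min: "\<And>n g. bad_seq subseq g \<Longrightarrow> \<forall>i. set (g i) \<subseteq> A \<Longrightarrow> \<forall>k<n. g k = m k
                  \<Longrightarrow> length (m n) \<le> length (g n)"
    by (rule minimal_bad_seq[where X = "{xs. set xs \<subseteq> A}" and w = length]) (use assms(2) in auto)
  have m_nonempty: "m i \<noteq> []" for i
  proof
    assume "m i = []"
    moreover have "\<not> subseq (m i) (m (Suc i))"
      using m_bad by (simp add: bad_seq_def)
    ultimately show False by simp
  qed
  have "hd (m i) \<in> A" for i
    using m_A m_nonempty hd_in_set by blast
  then have "finite (range (hd \<circ> m))"
    using assms(1) by (auto intro: finite_subset)
  then obtain c where c: "infinite ((hd \<circ> m) -` {c})"
    by (rule inf_img_fin_domE) auto
  obtain r :: "nat \<Rightarrow> nat" where r_mono: "strict_mono r" and r_hd: "\<forall>i. hd (m (r i)) = c"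
    using infinite_enumerate[OF c] by auto
  have m_r: "m (r i) = c # tl (m (r i))" for i
    using r_hd m_nonempty by (metis list.collapse)
  text \<open>Cutting the common head \<open>c\<close> off the words \<open>m (r i)\<close> gives a bad sequence that
    beats \<open>m\<close> at position \<open>r 0\<close>.\<close>
  define g where "g k = (if k < r 0 then m k else tl (m (r (k - r 0))))" for k
  have "bad_seq subseq g"
    unfolding g_def using bad_seq_splice_tails[OF m_bad r_mono m_r] .
  moreover have "\<forall>i. set (g i) \<subseteq> A"
    using m_A m_nonempty by (auto simp: g_def dest: list.set_sel(2))
  ultimately have "length (m (r 0)) \<le> length (g (r 0))"
    by (rule m_min) (simp add: g_def)
  moreover have "length (g (r 0)) < length (m (r 0))"
    using m_nonempty[of "r 0"] by (cases "m (r 0)") (simp_all add: g_def)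
  ultimately show False
    by simp
qed

lemma list_emb_strict_mono_index:
  assumes "list_emb P xs ys"
  shows "\<exists>k. strict_mono_on {..<length xs} k \<and>
           (\<forall>i<length xs. k i < length ys \<and> P (xs ! i) (ys ! k i))"
  using assms
proof (induction rule: list_emb.induct)
  case (list_emb_Nil ys)
  then show ?case by simp
next
  case (list_emb_Cons xs ys y)
  then obtain k where "strict_mono_on {..<length xs} k"
    and "\<forall>i<length xs. k i < length ys \<and> P (xs ! i) (ys ! k i)" by blast
  then show ?case
    by (intro exI[of _ "Suc \<circ> k"]) (auto simp: strict_mono_on_def)
next
  case (list_emb_Cons2 x y xs ys)
  then obtain k where k_mono: "strict_mono_on {..<length xs} k"
    and k_P: "\<forall>i<length xs. k i < length ys \<and> P (xs ! i) (ys ! k i)" by blast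
  define k' where "k' i = (case i of 0 \<Rightarrow> 0 | Suc i \<Rightarrow> Suc (k i))" for i
  have "strict_mono_on {..<length (x # xs)} k'"
    using k_mono by (auto simp: strict_mono_on_def k'_def split: nat.split)
  moreover have "\<forall>i<length (x # xs). k' i < length (y # ys) \<and> P ((x # xs) ! i) ((y # ys) ! k' i)"
    using k_P \<open>P x y\<close> by (auto simp: k'_def nth_Cons split: nat.split)
  ultimately show ?case by blast
qed

lemma subseq_imp_rl_le:
  assumes "subseq (snd S) (snd T)"
  shows "rl_le S T"
proof -
  obtain k where "strict_mono_on {..<length (snd S)} k"
    and "\<forall>i<length (snd S). k i < length (snd T) \<and> snd S ! i = snd T ! k i"
    using list_emb_strict_mono_index[OF assms] by blast
  then show ?thesis
    unfolding rl_le_def Let_def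
    by (intro exI[of _ k] exI[of _ "\<lambda>_ x. x"]) (auto simp: strict_mono_on_def)
qed

lemma RL_entries_subset:
  assumes "S \<in> RL M" and "fst S \<le> B"
  shows "set (snd S) \<subseteq> Pow {1..M * B}"
proof
  fix A assume "A \<in> set (snd S)"
  with assms(1) have "A \<subseteq> {1..M * fst S}"
    by (simp add: RL_def case_prod_beta)
  also have "\<dots> \<subseteq> {1..M * B}"
    using assms(2) by (simp add: mult_le_mono2)
  finally show "A \<in> Pow {1..M * B}" by simp
qed

theorem mainTheorem6:
  fixes M :: nat
  shows "\<not> (\<exists>(Sq :: nat \<Rightarrow> nat \<times> nat set list) (B :: nat).
            (\<forall>i. Sq i \<in> RL M) \<and> (\<forall>i. fst (Sq i) \<le> B) \<and>
            (\<forall>i j. i \<noteq> j \<longrightarrow> \<not> rl_le (Sq i) (Sq j)))"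
proof
  assume "\<exists>(Sq :: nat \<Rightarrow> nat \<times> nat set list) (B :: nat).
            (\<forall>i. Sq i \<in> RL M) \<and> (\<forall>i. fst (Sq i) \<le> B) \<and>
            (\<forall>i j. i \<noteq> j \<longrightarrow> \<not> rl_le (Sq i) (Sq j))"
  then obtain Sq :: "nat \<Rightarrow> nat \<times> nat set list" and B
    where RL: "\<forall>i. Sq i \<in> RL M" and bounded: "\<forall>i. fst (Sq i) \<le> B"
      and antichain: "\<forall>i j. i \<noteq> j \<longrightarrow> \<not> rl_le (Sq i) (Sq j)"
    by blast
  have "\<forall>i. set (snd (Sq i)) \<subseteq> Pow {1..M * B}"
    using RL bounded RL_entries_subset by blast
  with higman[of "Pow {1..M * B}" "\<lambda>i. snd (Sq i)"]
  obtain i j where "i < j" and "subseq (snd (Sq i)) (snd (Sq j))"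
    by auto
  then have "rl_le (Sq i) (Sq j)" and "i \<noteq> j"
    by (simp_all add: subseq_imp_rl_le)
  with antichain show False
    by simp
qed

end
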